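(* Let $\mathbb K$ be a naturally ordered positive semiring, $q$ a self-join-free conjunctive query, and $\Sigma$ a set of key constraints with one key per relation of $q$. Let $\mathfrak D$ be a $\mathbb K$-database and $\gamma$ an assignment such that $\mathfrak D',\gamma\models_{\mathbb K} q$ for every repair $\mathfrak D'\in\mathrm{Rep}(\mathfrak D,\Sigma)$, and let $x$ be a variable that is bound in $q$ and unattacked in $q$. Then there is an element $c\in D$ such that $\mathfrak D',\gamma(c/x)\models_{\mathbb K} q[x]$ for every repair $\mathfrak D'$ of $\mathfrak D$.
   Context: Semirings. A commutative semiring $\mathbb K=(K,+,\times,0,1)$ is positive if $a+b=0$ implies $a=b=0$ and it has no zero divisors; naturally ordered if $a\le_{\mathbb K}b:\iff\exists c\,(a+c=b)$ is a total order. Databases. A $\mathbb K$-database $\mathfrak D$ assigns to each relation symbol $R$ a function $R^{\mathfrak D}:\mathrm A^n\to K$ with finite support $\mathrm{Supp}(R^{\mathfrak D})=\{t:R^{\mathfrak D}(t)\neq0\}$; the active domain $D$ is the non-empty set of values occurring in supports. $\mathfrak D'\subseteq\mathfrak D$ means supports are included and values agree on the support of $\mathfrak D'$. An assignment maps variables to $D$; $\gamma(c/x)$ agrees with $\gamma$ except mapping $x$ to $c$. Keys and repairs. Atoms are written $R(\vec y;\vec z)$ with key positions $\vec y$; $\mathfrak D$ satisfies the key of $R$ if two tuples of $\mathrm{Supp}(R^{\mathfrak D})$ that agree on key positions are equal. A repair of $\mathfrak D$ w.r.t. $\Sigma$ is a $\mathbb K$-database $\mathfrak D'\subseteq\mathfrak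 D$ satisfying $\Sigma$ such that no $\mathfrak D''$ with $\mathfrak D'\subsetneq\mathfrak D''\subseteq\mathfrak D$ satisfies $\Sigma$. CQs. $q(\vec x)=\exists\vec y(R_1(\vec z_1)\wedge\dots\wedge R_k(\vec z_k))$ has value $q(\mathfrak D,\alpha)=\sum_{\vec a\in D^{|\vec y|}}\prod_iR_i^{\mathfrak D}(\beta(\vec z_i))$, $\beta=\alpha(\vec a/\vec y)$, and $\mathfrak D,\alpha\models_{\mathbb K}q$ means $q(\mathfrak D,\alpha)\neq 0$. $q[x]$ is $q$ with the quantifier $\exists x$ removed. Attacks. For an atom $R(\vec y;\vec z)$ of $q$, $\Sigma(q\setminus R)$ is the set of functional dependencies $\mathrm{key}(S)\to\mathsf{var}(S)$ for the atoms $S\neq R$ of $q$ (where $\mathrm{key}(S)$ is the set of variables in key positions of $S$), and $\mathsf{var}(\vec y)^+_{\Sigma(q\setminus R)}$ is the set of variables $v$ of $q$ with $\Sigma(q\setminus R)\models\mathsf{var}(\vec y)\to v$. $R(\vec y;\vec z)$ attacks a variable $x$ bound in $q$ if there is a non-empty sequence $x_1,\dots,x_n$ of variables bound in $q$ with $x_1\in\mathsf{var}(\vec z)$, $x_n=x$, consecutive variables co-occurring in some atom of $q$, and no $x_i$ belonging to $\mathsf{var}(\vec y)^+_{\Sigma(q\setminus R)}$. $x$ is unattacked if no atom attacks it. *)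

theory Defs
  imports Main
begin

definition positive_semiring :: "'k::comm_semiring_1 itself \<Rightarrow> bool" where
  "positive_semiring _ \<longleftrightarrow>
     (\<forall>a b :: 'k. a + b = 0 \<longrightarrow> a = 0 \<and> b = 0) \<and>
     (\<forall>a b :: 'k. a * b = 0 \<longrightarrow> a = 0 \<or> b = 0)"

definition nat_le :: "'k::comm_semiring_1 \<Rightarrow> 'k \<Rightarrow> bool" where
  "nat_le a b \<longleftrightarrow> (\<exists>c. a + c = b)"

definition naturally_ordered :: "'k::comm_semiring_1 itself \<Rightarrow> bool" where
  "naturally_ordered _ \<longleftrightarrow>
     (\<forall>a :: 'k. nat_le a a) \<and>
     (\<forall>a b c :: 'k. nat_le a b \<longrightarrow> nat_le b c \<longrightarrow> nat_le a c) \<and>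
     (\<forall>a b :: 'k. nat_le a b \<longrightarrow> nat_le b a \<longrightarrow> a = b) \<and>
     (\<forall>a b :: 'k. nat_le a b \<or> nat_le b a)"

type_synonym ('r, 'a, 'k) db = "'r \<Rightarrow> 'a list \<Rightarrow> 'k"

definition adom :: "('r, 'a, 'k::zero) db \<Rightarrow> 'a set" where
  "adom D = {a. \<exists>R t. D R t \<noteq> 0 \<and> a \<in> set t}"

definition is_db :: "('r \<Rightarrow> nat) \<Rightarrow> ('r, 'a, 'k::zero) db \<Rightarrow> bool" where
  "is_db ar D \<longleftrightarrow> finite {(R, t). D R t \<noteq> 0}
      \<and> (\<forall>R t. D R t \<noteq> 0 \<longrightarrow> length t = ar R)
      \<and> adom D \<noteq> {}"

definition subdb :: "('r, 'a, 'k::zero) db \<Rightarrow> ('r, 'a, 'k) db \<Rightarrow> bool" where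
  "subdb D' D \<longleftrightarrow> (\<forall>R t. D' R t \<noteq> 0 \<longrightarrow> D R t = D' R t)"

text \<open>Key constraints: Sigma R = Some k means that the first k positions of R form its key
  (atoms are written R(y;z) with the key positions first).\<close>
definition sat_keys :: "('r \<Rightarrow> nat option) \<Rightarrow> ('r, 'a, 'k::zero) db \<Rightarrow> bool" where
  "sat_keys \<Sigma> D \<longleftrightarrow> (\<forall>R k t u. \<Sigma> R = Some k \<longrightarrow> D R t \<noteq> 0 \<longrightarrow> D R u \<noteq> 0
      \<longrightarrow> take k t = take k u \<longrightarrow> t = u)"

definition repairs :: "('r \<Rightarrow> nat option) \<Rightarrow> ('r, 'a, 'k::zero) db \<Rightarrow> ('r, 'a, 'k) db set" where
  "repairs \<Sigma> D = {D'. subdb D' D \<and> sat_keys \<Sigma> D' \<and>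
      \<not> (\<exists>D''. subdb D' D'' \<and> D' \<noteq> D'' \<and> subdb D'' D \<and> sat_keys \<Sigma> D'')}"

text \<open>An atom R(y;z) is a triple (R, y, z) of a relation symbol, the variables in key
  positions and the variables in non-key positions. A CQ is given by its set Y of
  existentially quantified variables and its list of atoms.\<close>

type_synonym ('r, 'v) atom = "'r \<times> 'v list \<times> 'v list"

definition atom_vars :: "('r, 'v) atom \<Rightarrow> 'v set" where
  "atom_vars A = set (fst (snd A)) \<union> set (snd (snd A))"

definition atom_key :: "('r, 'v) atom \<Rightarrow> 'v set" where
  "atom_key A = set (fst (snd A))"

definition atom_nonkey :: "('r, 'v) atom \<Rightarrow> 'v set" where
  "atom_nonkey A = set (snd (snd A))"

definition query_vars :: "('r, 'v) atom list \<Rightarrow> 'v set" where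
  "query_vars As = (\<Union>A\<in>set As. atom_vars A)"

definition extensions :: "'v set \<Rightarrow> 'a set \<Rightarrow> ('v \<Rightarrow> 'a) \<Rightarrow> ('v \<Rightarrow> 'a) set" where
  "extensions Y Dom \<alpha> = {\<beta>. (\<forall>v\<in>Y. \<beta> v \<in> Dom) \<and> (\<forall>v. v \<notin> Y \<longrightarrow> \<beta> v = \<alpha> v)}"

definition qval :: "'v set \<Rightarrow> ('r, 'v) atom list \<Rightarrow> ('r, 'a, 'k::comm_semiring_1) db
                    \<Rightarrow> ('v \<Rightarrow> 'a) \<Rightarrow> 'k" where
  "qval Y As D \<alpha> = (\<Sum>\<beta>\<in>extensions Y (adom D) \<alpha>.
       prod_list (map (\<lambda>(R, ys, zs). D R (map \<beta> (ys @ zs))) As))"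

definition models :: "('r, 'a, 'k::comm_semiring_1) db \<Rightarrow> ('v \<Rightarrow> 'a) \<Rightarrow> 'v set
                      \<Rightarrow> ('r, 'v) atom list \<Rightarrow> bool" where
  "models D \<alpha> Y As \<longleftrightarrow> qval Y As D \<alpha> \<noteq> 0"

definition self_join_free :: "('r, 'v) atom list \<Rightarrow> bool" where
  "self_join_free As \<longleftrightarrow> distinct (map fst As)"

definition fd_holds :: "('v \<Rightarrow> nat) set \<Rightarrow> 'v set \<Rightarrow> 'v set \<Rightarrow> bool" where
  "fd_holds r X Z \<longleftrightarrow> (\<forall>t\<in>r. \<forall>u\<in>r. (\<forall>v\<in>X. t v = u v) \<longrightarrow> (\<forall>v\<in>Z. t v = u v))"

definition fd_entails :: "('v set \<times> 'v set) set \<Rightarrow> 'v set \<Rightarrow> 'v set \<Rightarrow> bool" where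
  "fd_entails F X Z \<longleftrightarrow> (\<forall>r. finite r \<longrightarrow> (\<forall>(A, B)\<in>F. fd_holds r A B) \<longrightarrow> fd_holds r X Z)"

definition fds_without :: "('r, 'v) atom list \<Rightarrow> nat \<Rightarrow> ('v set \<times> 'v set) set" where
  "fds_without As i = {(atom_key (As ! j), atom_vars (As ! j)) | j. j < length As \<and> j \<noteq> i}"

definition key_closure :: "('r, 'v) atom list \<Rightarrow> nat \<Rightarrow> 'v set" where
  "key_closure As i = {v \<in> query_vars As. fd_entails (fds_without As i) (atom_key (As ! i)) {v}}"

definition attacks :: "'v set \<Rightarrow> ('r, 'v) atom list \<Rightarrow> nat \<Rightarrow> 'v \<Rightarrow> bool" where
  "attacks Y As i x \<longleftrightarrow> (\<exists>xs. xs \<noteq> [] \<and> set xs \<subseteq> Y \<and> hd xs \<in> atom_nonkey (As ! i)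
      \<and> last xs = x
      \<and> (\<forall>j. Suc j < length xs \<longrightarrow>
             (\<exists>A\<in>set As. xs ! j \<in> atom_vars A \<and> xs ! Suc j \<in> atom_vars A))
      \<and> (\<forall>v\<in>set xs. v \<notin> key_closure As i))"

definition unattacked :: "'v set \<Rightarrow> ('r, 'v) atom list \<Rightarrow> 'v \<Rightarrow> bool" where
  "unattacked Y As x \<longleftrightarrow> (\<forall>i < length As. \<not> attacks Y As i x)"

end

theory Submission
  imports Defs "HOL-Library.FuncSet"
begin

text \<open>Over a positive semiring, \<open>D', \<gamma> \<Turnstile> q\<close> only says that some valuation extending \<open>\<gamma>\<close>
  maps every atom of \<open>q\<close> into the support of \<open>D'\<close>. Let \<open>V(D')\<close> be the set of values such
  valuations give to \<open>x\<close>. The family of the sets \<open>V(D')\<close>, for \<open>D'\<close> ranging over the repairs,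
  is downward directed: as long as a repair \<open>s\<close> has a valuation \<open>\<rho>\<close> that fails in another
  repair \<open>r\<close>, replace in \<open>s\<close> the key block of the failing fact by the corresponding block of
  \<open>r\<close>. This gives a repair closer to \<open>r\<close> whose \<open>V\<close> is contained in \<open>V(s)\<close>: a valuation \<open>\<mu>\<close>
  of the new repair agrees with \<open>\<rho>\<close> on the key closure of the swapped atom \<open>R\<close>, and since
  \<open>R\<close> does not attack \<open>x\<close>, patching \<open>\<rho>\<close> with \<open>\<mu>\<close> on the variables reachable from \<open>x\<close>
  outside that closure gives a valuation of \<open>s\<close> with the same value at \<open>x\<close>. All \<open>V(D')\<close>
  meet the finite active domain, so one of minimal size is contained in all others.\<close>

section \<open>Satisfaction through supports\<close>

definition atom_tuple :: "('v \<Rightarrow> 'a) \<Rightarrow> ('r, 'v) atom \<Rightarrow> 'a list" where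
  "atom_tuple \<beta> A = map \<beta> (fst (snd A) @ snd (snd A))"

definition homs :: "'v set \<Rightarrow> ('r, 'v) atom list \<Rightarrow> ('v \<Rightarrow> 'a) \<Rightarrow> ('r, 'a, 'k::zero) db
                    \<Rightarrow> ('v \<Rightarrow> 'a) set" where
  "homs Y As \<alpha> D = {\<beta>. (\<forall>v. v \<notin> Y \<longrightarrow> \<beta> v = \<alpha> v) \<and> (\<forall>A\<in>set As. D (fst A) (atom_tuple \<beta> A) \<noteq> 0)}"

definition hom_values :: "'v set \<Rightarrow> ('r, 'v) atom list \<Rightarrow> ('v \<Rightarrow> 'a) \<Rightarrow> ('r, 'a, 'k::zero) db
                          \<Rightarrow> 'v \<Rightarrow> 'a set" where
  "hom_values Y As \<alpha> D x = (\<lambda>\<beta>. \<beta> x) ` homs Y As \<alpha> D"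

lemma atom_tuple_cong:
  "(\<And>v. v \<in> atom_vars A \<Longrightarrow> \<beta> v = \<beta>' v) \<Longrightarrow> atom_tuple \<beta> A = atom_tuple \<beta>' A"
  by (auto simp: atom_tuple_def atom_vars_def)

lemma atom_tuple_in_adom:
  assumes "D (fst A) (atom_tuple \<beta> A) \<noteq> 0" and "v \<in> atom_vars A"
  shows "\<beta> v \<in> adom D"
  using assms unfolding adom_def atom_tuple_def atom_vars_def by force

lemma sum_eq_0_iff_positive:
  fixes f :: "'b \<Rightarrow> 'k::comm_monoid_add"
  assumes "\<And>a b::'k. a + b = 0 \<Longrightarrow> a = 0 \<and> b = 0" and "finite S"
  shows "sum f S = 0 \<longleftrightarrow> (\<forall>s\<in>S. f s = 0)"
  using assms(2) by (induction S rule: finite_induct) (auto dest: assms(1))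

lemma prod_list_neq_0_iff_no_zero_divisors:
  fixes xs :: "'k::comm_semiring_1 list"
  assumes "\<And>a b::'k. a * b = 0 \<Longrightarrow> a = 0 \<or> b = 0"
  shows "prod_list xs \<noteq> 0 \<longleftrightarrow> (\<forall>a\<in>set xs. a \<noteq> 0)"
  by (induction xs) (auto dest: assms)

lemma finite_extensions:
  assumes "finite Y" and "finite Dom"
  shows "finite (extensions Y Dom \<alpha>)"
proof (rule finite_imageD)
  have "(\<lambda>\<beta>. restrict \<beta> Y) ` extensions Y Dom \<alpha> \<subseteq> Pi\<^sub>E Y (\<lambda>_. Dom)"
    by (auto simp: extensions_def)
  then show "finite ((\<lambda>\<beta>. restrict \<beta> Y) ` extensions Y Dom \<alpha>)"
    using assms by (meson finite_PiE finite_subset)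
  show "inj_on (\<lambda>\<beta>. restrict \<beta> Y) (extensions Y Dom \<alpha>)"
  proof (rule inj_onI, rule ext)
    fix \<beta> \<beta>' v
    assume "\<beta> \<in> extensions Y Dom \<alpha>" "\<beta>' \<in> extensions Y Dom \<alpha>" "restrict \<beta> Y = restrict \<beta>' Y"
    then show "\<beta> v = \<beta>' v"
      by (cases "v \<in> Y") (auto simp: extensions_def dest: fun_cong[of _ _ v])
  qed
qed

lemma models_iff_extension:
  fixes D :: "('r, 'a, 'k::comm_semiring_1) db"
  assumes "positive_semiring TYPE('k)" and "finite Y" and "finite (adom D)"
  shows "models D \<alpha> Y As \<longleftrightarrow>
           (\<exists>\<beta>\<in>extensions Y (adom D) \<alpha>. \<forall>A\<in>set As. D (fst A) (atom_tuple \<beta> A) \<noteq> 0)"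
proof -
  have add: "\<And>a b::'k. a + b = 0 \<Longrightarrow> a = 0 \<and> b = 0" and mult: "\<And>a b::'k. a * b = 0 \<Longrightarrow> a = 0 \<or> b = 0"
    using assms(1) unfolding positive_semiring_def by blast+
  have "qval Y As D \<alpha> =
          (\<Sum>\<beta>\<in>extensions Y (adom D) \<alpha>. prod_list (map (\<lambda>A. D (fst A) (atom_tuple \<beta> A)) As))"
    unfolding qval_def atom_tuple_def by (simp add: case_prod_beta')
  then show ?thesis
    by (simp add: models_def sum_eq_0_iff_positive[OF add finite_extensions[OF assms(2,3)]]
        prod_list_neq_0_iff_no_zero_divisors[OF mult])
qed

lemma homs_if_models:
  fixes D :: "('r, 'a, 'k::comm_semiring_1) db"
  assumes "positive_semiring TYPE('k)" and "finite Y" and "finite (adom D)"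
    and "models D \<alpha> Y As"
  obtains \<beta> where "\<beta> \<in> homs Y As \<alpha> D" and "\<forall>v\<in>Y. \<beta> v \<in> adom D"
  using assms by (auto simp: models_iff_extension extensions_def homs_def)

lemma models_if_homs:
  fixes D :: "('r, 'a, 'k::comm_semiring_1) db"
  assumes "positive_semiring TYPE('k)" and "finite Y" and "finite (adom D)"
    and "adom D \<noteq> {}" and "\<beta> \<in> homs Y As \<alpha> D"
  shows "models D \<alpha> Y As"
proof -
  obtain d where d: "d \<in> adom D" using assms(4) by blast
  define \<beta>' where "\<beta>' v = (if v \<in> query_vars As then \<beta> v else if v \<in> Y then d else \<alpha> v)" for v
  have tuple: "atom_tuple \<beta>' A = atom_tuple \<beta> A" if "A \<in> set As" for A
    using that by (intro atom_tuple_cong) (auto simp: \<beta>'_def query_vars_def)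
  have "\<beta>' \<in> extensions Y (adom D) \<alpha>"
    using assms(5) d by (auto simp: extensions_def homs_def \<beta>'_def query_vars_def
        intro: atom_tuple_in_adom)
  moreover have "\<forall>A\<in>set As. D (fst A) (atom_tuple \<beta>' A) \<noteq> 0"
    using assms(5) tuple by (simp add: homs_def)
  ultimately show ?thesis
    using models_iff_extension[OF assms(1-3)] by blast
qed

lemma hom_values_meet_adom:
  fixes D :: "('r, 'a, 'k::comm_semiring_1) db"
  assumes "positive_semiring TYPE('k)" and "finite Y" and "finite (adom D)"
    and "models D \<alpha> Y As" and "x \<in> Y"
  shows "hom_values Y As \<alpha> D x \<inter> adom D \<noteq> {}"
proof -
  obtain \<beta> where "\<beta> \<in> homs Y As \<alpha> D" "\<forall>v\<in>Y. \<beta> v \<in> adom D"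
    using homs_if_models[OF assms(1-4)] by blast
  then show ?thesis using assms(5) by (auto simp: hom_values_def)
qed

lemma models_fix_variable:
  fixes D :: "('r, 'a, 'k::comm_semiring_1) db"
  assumes "positive_semiring TYPE('k)" and "finite Y" and "finite (adom D)"
    and "adom D \<noteq> {}" and "c \<in> hom_values Y As \<alpha> D x"
  shows "models D (\<alpha>(x := c)) (Y - {x}) As"
proof -
  obtain \<nu> where "\<nu> \<in> homs Y As \<alpha> D" "\<nu> x = c"
    using assms(5) by (auto simp: hom_values_def)
  then have "\<nu> \<in> homs (Y - {x}) As (\<alpha>(x := c)) D" by (auto simp: homs_def)
  then show ?thesis using models_if_homs[OF assms(1) _ assms(3,4)] assms(2) by blast
qed

section \<open>Repairs\<close>

lemma adom_mono: "subdb D' D \<Longrightarrow> adom D' \<subseteq> adom D"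
  by (auto simp: subdb_def adom_def) (metis)

lemma finite_adom: "is_db ar D \<Longrightarrow> finite (adom D)"
proof -
  assume "is_db ar D"
  then have "finite (\<Union>(R, t)\<in>{(R, t). D R t \<noteq> 0}. set t)" by (auto simp: is_db_def)
  moreover have "adom D \<subseteq> (\<Union>(R, t)\<in>{(R, t). D R t \<noteq> 0}. set t)" by (auto simp: adom_def)
  ultimately show ?thesis by (rule finite_subset[rotated])
qed

lemma repair_subdb: "D' \<in> repairs \<Sigma> D \<Longrightarrow> subdb D' D"
  by (simp add: repairs_def)

lemma finite_adom_repair:
  assumes "is_db ar D" and "D' \<in> repairs \<Sigma> D"
  shows "finite (adom D')"
  using finite_subset[OF adom_mono[OF repair_subdb[OF assms(2)]] finite_adom[OF assms(1)]] .

definition blocked :: "('r \<Rightarrow> nat option) \<Rightarrow> ('r, 'a, 'k::zero) db \<Rightarrow> 'r \<Rightarrow> 'a list \<Rightarrow> bool" where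
  "blocked \<Sigma> D R t \<longleftrightarrow> (\<exists>n u. \<Sigma> R = Some n \<and> D R u \<noteq> 0 \<and> take n u = take n t \<and> u \<noteq> t)"

lemma repairs_iff:
  "D' \<in> repairs \<Sigma> D \<longleftrightarrow> subdb D' D \<and> sat_keys \<Sigma> D' \<and>
     (\<forall>R t. D R t \<noteq> 0 \<longrightarrow> D' R t = 0 \<longrightarrow> blocked \<Sigma> D' R t)"
proof (intro iffI conjI allI impI)
  assume rep: "D' \<in> repairs \<Sigma> D"
  then show sub: "subdb D' D" and keys: "sat_keys \<Sigma> D'" by (auto simp: repairs_def)
  fix R t assume "D R t \<noteq> 0" "D' R t = 0"
  show "blocked \<Sigma> D' R t"
  proof (rule ccontr)
    assume "\<not> blocked \<Sigma> D' R t"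
    define D'' where "D'' = D'(R := (D' R)(t := D R t))"
    have "subdb D' D''" "D' \<noteq> D''" "subdb D'' D" "sat_keys \<Sigma> D''"
      using \<open>D R t \<noteq> 0\<close> \<open>D' R t = 0\<close> \<open>\<not> blocked \<Sigma> D' R t\<close> sub keys
      by (auto simp: subdb_def D''_def fun_eq_iff sat_keys_def blocked_def)
    then show False using rep by (auto simp: repairs_def)
  qed
next
  assume "subdb D' D \<and> sat_keys \<Sigma> D' \<and> (\<forall>R t. D R t \<noteq> 0 \<longrightarrow> D' R t = 0 \<longrightarrow> blocked \<Sigma> D' R t)"
  then have sub: "subdb D' D" and keys: "sat_keys \<Sigma> D'"
    and max: "\<And>R t. D R t \<noteq> 0 \<Longrightarrow> D' R t = 0 \<Longrightarrow> blocked \<Sigma> D' R t" by blast+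
  have "\<not> (subdb D' D'' \<and> D' \<noteq> D'' \<and> subdb D'' D \<and> sat_keys \<Sigma> D'')" for D''
  proof
    assume D'': "subdb D' D'' \<and> D' \<noteq> D'' \<and> subdb D'' D \<and> sat_keys \<Sigma> D''"
    then obtain R t where "D' R t \<noteq> D'' R t" by (auto simp: fun_eq_iff)
    with D'' have "D' R t = 0" "D'' R t \<noteq> 0" "D R t \<noteq> 0" unfolding subdb_def by metis+
    then obtain n u where "\<Sigma> R = Some n" "D' R u \<noteq> 0" "take n u = take n t" "u \<noteq> t"
      using max unfolding blocked_def by blast
    with D'' \<open>D'' R t \<noteq> 0\<close> show False unfolding subdb_def sat_keys_def by metis
  qed
  with sub keys show "D' \<in> repairs \<Sigma> D" by (auto simp: repairs_def)
qed

lemma repair_swap_block: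
  assumes r: "r \<in> repairs \<Sigma> D" and s: "s \<in> repairs \<Sigma> D" and key: "\<Sigma> R = Some n"
  shows "(\<lambda>R' u. if R' = R \<and> take n u = k then r R' u else s R' u) \<in> repairs \<Sigma> D"
    (is "?s' \<in> _")
  unfolding repairs_iff
proof (intro conjI allI impI)
  \<comment> \<open>A key block of \<open>R\<close> lies entirely inside or entirely outside the region taken from \<open>r\<close>,
    so key satisfaction and blocking are inherited from \<open>r\<close> or from \<open>s\<close>.\<close>
  show "subdb ?s' D" using r s by (auto simp: repairs_iff subdb_def)
  show "sat_keys \<Sigma> ?s'"
    using r s key unfolding repairs_iff sat_keys_def by (smt (verit) option.inject)
  fix R' t assume "D R' t \<noteq> 0" "?s' R' t = 0"
  then show "blocked \<Sigma> ?s' R' t"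
    using r s key unfolding repairs_iff blocked_def by (smt (verit) option.inject)
qed

definition db_diff :: "('r, 'a, 'k) db \<Rightarrow> ('r, 'a, 'k) db \<Rightarrow> ('r \<times> 'a list) set" where
  "db_diff D D' = {(R, t). D R t \<noteq> D' R t}"

lemma finite_db_diff_repairs:
  assumes "is_db ar D" and "r \<in> repairs \<Sigma> D" and "s \<in> repairs \<Sigma> D"
  shows "finite (db_diff r s)"
proof (rule finite_subset)
  show "db_diff r s \<subseteq> {(R, t). D R t \<noteq> 0}"
    using repair_subdb[OF assms(2)] repair_subdb[OF assms(3)] unfolding db_diff_def subdb_def
    by (clarsimp, metis)
  show "finite {(R, t). D R t \<noteq> 0}" using assms(1) by (simp add: is_db_def)
qed

section \<open>Key closures and attacks\<close>

lemma fd_entails_agree: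
  fixes \<mu> \<rho> :: "'v \<Rightarrow> 'a"
  assumes "fd_entails F X Z"
    and "\<forall>(U, W)\<in>F. (\<forall>v\<in>U. \<mu> v = \<rho> v) \<longrightarrow> (\<forall>v\<in>W. \<mu> v = \<rho> v)"
    and "\<forall>v\<in>X. \<mu> v = \<rho> v"
  shows "\<forall>v\<in>Z. \<mu> v = \<rho> v"
proof -
  \<comment> \<open>Evaluate the entailment on the two-row relation whose rows differ exactly where \<open>\<mu>\<close> and
    \<open>\<rho>\<close> do.\<close>
  define t :: "'v \<Rightarrow> nat" where "t w = (if \<mu> w = \<rho> w then 0 else 1)" for w
  have holds: "fd_holds {\<lambda>_. 0, t} U W \<longleftrightarrow> ((\<forall>v\<in>U. \<mu> v = \<rho> v) \<longrightarrow> (\<forall>v\<in>W. \<mu> v = \<rho> v))"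
    for U W unfolding fd_holds_def t_def by auto
  have "\<forall>(U, W)\<in>F. fd_holds {\<lambda>_. 0, t} U W" using assms(2) holds by auto
  then have "fd_holds {\<lambda>_. 0, t} X Z"
    using assms(1) unfolding fd_entails_def by (elim allE[of _ "{\<lambda>_. 0, t}"]) simp
  then show ?thesis using assms(3) holds by blast
qed

lemma key_subset_key_closure:
  assumes "i < length As"
  shows "atom_key (As ! i) \<subseteq> key_closure As i"
  using assms nth_mem[OF assms]
  by (auto simp: key_closure_def fd_entails_def fd_holds_def query_vars_def atom_vars_def atom_key_def)

lemma atom_tuple_eq_if_key_eq:
  assumes "sat_keys \<Sigma> D" and "\<Sigma> R = Some (length ys)"
    and "D R (atom_tuple \<mu> (R, ys, zs)) \<noteq> 0" and "D R (atom_tuple \<rho> (R, ys, zs)) \<noteq> 0"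
    and "\<forall>v\<in>set ys. \<mu> v = \<rho> v"
  shows "atom_tuple \<mu> (R, ys, zs) = atom_tuple \<rho> (R, ys, zs)"
  using assms unfolding sat_keys_def atom_tuple_def by (simp add: map_eq_conv)

lemma agree_on_key_closure:
  assumes "sat_keys \<Sigma> D" and keys: "\<forall>(R, ys, zs)\<in>set As. \<Sigma> R = Some (length ys)"
    and "i < length As"
    and sat: "\<forall>j<length As. j \<noteq> i \<longrightarrow>
                D (fst (As ! j)) (atom_tuple \<mu> (As ! j)) \<noteq> 0 \<and> D (fst (As ! j)) (atom_tuple \<rho> (As ! j)) \<noteq> 0"
    and "\<forall>v\<in>atom_key (As ! i). \<mu> v = \<rho> v"
  shows "\<forall>v\<in>key_closure As i. \<mu> v = \<rho> v"
proof -
  have "\<forall>v\<in>atom_vars (As ! j). \<mu> v = \<rho> v"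
    if "j < length As" "j \<noteq> i" "\<forall>v\<in>atom_key (As ! j). \<mu> v = \<rho> v" for j
  proof -
    obtain R ys zs where Aj: "As ! j = (R, ys, zs)" by (cases "As ! j")
    then have "\<Sigma> R = Some (length ys)" using keys nth_mem[OF \<open>j < length As\<close>] by fastforce
    then have "atom_tuple \<mu> (As ! j) = atom_tuple \<rho> (As ! j)"
      using atom_tuple_eq_if_key_eq[OF \<open>sat_keys \<Sigma> D\<close>] sat that Aj
      by (metis atom_key_def fst_conv snd_conv)
    then show ?thesis by (auto simp: atom_tuple_def atom_vars_def map_eq_conv)
  qed
  then have "\<forall>(U, W)\<in>fds_without As i. (\<forall>v\<in>U. \<mu> v = \<rho> v) \<longrightarrow> (\<forall>v\<in>W. \<mu> v = \<rho> v)"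
    by (auto simp: fds_without_def)
  with assms(5) show ?thesis
    unfolding key_closure_def using fd_entails_agree by blast
qed

inductive_set closure_avoiding_reach :: "'v set \<Rightarrow> ('r, 'v) atom list \<Rightarrow> nat \<Rightarrow> 'v \<Rightarrow> 'v set"
  for Y As i x where
  start: "x \<in> Y \<Longrightarrow> x \<notin> key_closure As i \<Longrightarrow> x \<in> closure_avoiding_reach Y As i x"
| step: "w \<in> closure_avoiding_reach Y As i x \<Longrightarrow> A \<in> set As \<Longrightarrow> w \<in> atom_vars A \<Longrightarrow>
         v \<in> atom_vars A \<Longrightarrow> v \<in> Y \<Longrightarrow> v \<notin> key_closure As i \<Longrightarrow>
         v \<in> closure_avoiding_reach Y As i x"

lemma closure_avoiding_reachD:
  "v \<in> closure_avoiding_reach Y As i x \<Longrightarrow> v \<in> Y \<and> v \<notin> key_closure As i"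
  by (induction rule: closure_avoiding_reach.induct) auto

lemma closure_avoiding_reach_path:
  assumes "v \<in> closure_avoiding_reach Y As i x"
  shows "\<exists>xs. xs \<noteq> [] \<and> hd xs = v \<and> set xs \<subseteq> Y \<and> last xs = x
      \<and> (\<forall>j. Suc j < length xs \<longrightarrow> (\<exists>A\<in>set As. xs ! j \<in> atom_vars A \<and> xs ! Suc j \<in> atom_vars A))
      \<and> (\<forall>w\<in>set xs. w \<notin> key_closure As i)"
  using assms
proof (induction rule: closure_avoiding_reach.induct)
  case start
  then show ?case by (intro exI[of _ "[x]"]) auto
next
  case (step w A v)
  then obtain xs where xs: "xs \<noteq> []" "hd xs = w" "set xs \<subseteq> Y" "last xs = x"
    "\<forall>j. Suc j < length xs \<longrightarrow> (\<exists>A\<in>set As. xs ! j \<in> atom_vars A \<and> xs ! Suc j \<in> atom_vars A)"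
    "\<forall>w\<in>set xs. w \<notin> key_closure As i" by blast
  have "\<exists>A\<in>set As. (v # xs) ! j \<in> atom_vars A \<and> (v # xs) ! Suc j \<in> atom_vars A"
    if "Suc j < length (v # xs)" for j
  proof (cases j)
    case 0
    then show ?thesis using step.hyps xs(1,2) by (auto simp: hd_conv_nth)
  next
    case (Suc j')
    then show ?thesis using xs(5) that by auto
  qed
  with step.hyps xs show ?case by (intro exI[of _ "v # xs"]) auto
qed

lemma attacks_if_reach_meets_atom:
  assumes "v \<in> closure_avoiding_reach Y As i x" and "i < length As" and "v \<in> atom_vars (As ! i)"
  shows "attacks Y As i x"
proof -
  have "v \<notin> atom_key (As ! i)"
    using closure_avoiding_reachD[OF assms(1)] key_subset_key_closure[OF assms(2)] by blast
  then have "v \<in> atom_nonkey (As ! i)"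
    using assms(3) by (auto simp: atom_vars_def atom_key_def atom_nonkey_def)
  then show ?thesis
    using closure_avoiding_reach_path[OF assms(1)] unfolding attacks_def by metis
qed

lemma hom_patch:
  assumes "unattacked Y As x" and "x \<in> Y" and "i < length As"
    and \<rho>: "\<rho> \<in> homs Y As \<gamma> D"
    and \<mu>_sat: "\<forall>j<length As. j \<noteq> i \<longrightarrow> D (fst (As ! j)) (atom_tuple \<mu> (As ! j)) \<noteq> 0"
    and \<mu>_outside: "\<forall>v. v \<notin> Y \<longrightarrow> \<mu> v = \<gamma> v"
    and agree: "\<forall>v\<in>key_closure As i. \<mu> v = \<rho> v"
  shows "\<exists>\<nu>\<in>homs Y As \<gamma> D. \<nu> x = \<mu> x"
proof -
  define Z where "Z = closure_avoiding_reach Y As i x"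
  define \<nu> where "\<nu> v = (if v \<in> Z then \<mu> v else \<rho> v)" for v
  have \<rho>_outside: "\<forall>v. v \<notin> Y \<longrightarrow> \<rho> v = \<gamma> v"
    and \<rho>_sat: "\<forall>A\<in>set As. D (fst A) (atom_tuple \<rho> A) \<noteq> 0"
    using \<rho> by (auto simp: homs_def)
  have "D (fst A) (atom_tuple \<nu> A) \<noteq> 0" if "A \<in> set As" for A
  proof (cases "atom_vars A \<inter> Z = {}")
    case True
    then have "atom_tuple \<nu> A = atom_tuple \<rho> A" by (intro atom_tuple_cong) (auto simp: \<nu>_def)
    then show ?thesis using \<rho>_sat that by simp
  next
    case False
    then obtain w where w: "w \<in> atom_vars A" "w \<in> Z" by blast
    obtain j where j: "j < length As" "As ! j = A" using \<open>A \<in> set As\<close> by (auto simp: in_set_conv_nth)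
    have "j \<noteq> i"
      using attacks_if_reach_meets_atom w j \<open>unattacked Y As x\<close> by (fastforce simp: Z_def unattacked_def)
    have "\<nu> v = \<mu> v" if "v \<in> atom_vars A" for v
      using closure_avoiding_reach.step[OF w(2)[unfolded Z_def] \<open>A \<in> set As\<close> w(1) that]
        agree \<mu>_outside \<rho>_outside by (cases "v \<in> Y") (force simp: \<nu>_def Z_def)+
    then have "atom_tuple \<nu> A = atom_tuple \<mu> A" by (intro atom_tuple_cong)
    then show ?thesis using \<mu>_sat j \<open>j \<noteq> i\<close> by auto
  qed
  moreover have "\<nu> v = \<gamma> v" if "v \<notin> Y" for v
    using that closure_avoiding_reachD[of v Y As i x] \<rho>_outside by (auto simp: \<nu>_def Z_def)
  moreover have "\<nu> x = \<mu> x"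
    using closure_avoiding_reach.start[OF \<open>x \<in> Y\<close>, of As i] agree unfolding \<nu>_def Z_def
    by (cases "x \<in> key_closure As i") auto
  ultimately have "\<nu> \<in> homs Y As \<gamma> D" "\<nu> x = \<mu> x" by (auto simp: homs_def)
  then show ?thesis by blast
qed

section \<open>Exchanging key blocks between repairs\<close>

lemma self_join_free_nth_eq:
  assumes "self_join_free As" and "i < length As" and "j < length As"
    and "fst (As ! i) = fst (As ! j)"
  shows "i = j"
  using assms nth_eq_iff_index_eq[of "map fst As"] by (simp add: self_join_free_def)

lemma finite_directed_family_common_element:
  assumes "finite S" and "S \<noteq> {}" and F: "\<forall>i\<in>I. F i \<subseteq> S \<and> F i \<noteq> {}"
    and directed: "\<forall>i\<in>I. \<forall>j\<in>I. \<exists>k\<in>I. F k \<subseteq> F i \<inter> F j"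
  shows "\<exists>c\<in>S. \<forall>i\<in>I. c \<in> F i"
proof (cases "I = {}")
  case False
  then obtain i where "i \<in> I" and min: "\<forall>j\<in>I. card (F i) \<le> card (F j)"
    using ex_has_least_nat[of "\<lambda>i. i \<in> I" _ "\<lambda>i. card (F i)"] by blast
  have "F i \<subseteq> F j" if "j \<in> I" for j
  proof -
    obtain k where "k \<in> I" "F k \<subseteq> F i \<inter> F j" using directed \<open>i \<in> I\<close> \<open>j \<in> I\<close> by blast
    moreover have "finite (F i)" using F \<open>i \<in> I\<close> \<open>finite S\<close> finite_subset by blast
    ultimately have "F k = F i" using min card_seteq[of "F i" "F k"] by blast
    with \<open>F k \<subseteq> F i \<inter> F j\<close> show ?thesis by blast
  qed
  moreover obtain c where "c \<in> F i" using F \<open>i \<in> I\<close> by blast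
  ultimately show ?thesis using F \<open>i \<in> I\<close> by blast
qed (use assms(2) in blast)

context
  fixes Y :: "'v set" and As :: "('r, 'v) atom list" and \<Sigma> :: "'r \<Rightarrow> nat option"
    and \<gamma> :: "'v \<Rightarrow> 'a" and x :: 'v
  assumes sjf: "self_join_free As"
    and keys: "\<forall>(R, ys, zs)\<in>set As. \<Sigma> R = Some (length ys)"
    and unattacked: "unattacked Y As x"
    and "x \<in> Y"
begin

lemma exists_closer_repair:
  fixes D r s :: "('r, 'a, 'k::zero) db"
  assumes r: "r \<in> repairs \<Sigma> D" and s: "s \<in> repairs \<Sigma> D"
    and "\<rho> \<in> homs Y As \<gamma> s" and "\<rho> \<notin> homs Y As \<gamma> r"
  shows "\<exists>s'\<in>repairs \<Sigma> D. db_diff r s' \<subset> db_diff r s \<and>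
           hom_values Y As \<gamma> s' x \<subseteq> hom_values Y As \<gamma> s x"
proof -
  obtain i where i: "i < length As" and r0: "r (fst (As ! i)) (atom_tuple \<rho> (As ! i)) = 0"
    using assms(3,4) by (auto simp: homs_def in_set_conv_nth)
  obtain R ys zs where Ai: "As ! i = (R, ys, zs)" by (cases "As ! i")
  have key: "\<Sigma> R = Some (length ys)" using keys nth_mem[OF i] Ai by fastforce
  define k where "k = take (length ys) (atom_tuple \<rho> (As ! i))"
  define s' where "s' R' u = (if R' = R \<and> take (length ys) u = k then r R' u else s R' u)" for R' u
  have s': "s' \<in> repairs \<Sigma> D"
    unfolding s'_def[abs_def] by (rule repair_swap_block[OF r s key])
  have "s (fst (As ! i)) (atom_tuple \<rho> (As ! i)) \<noteq> 0"
    using assms(3) i by (simp add: homs_def)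
  then have "(R, atom_tuple \<rho> (As ! i)) \<in> db_diff r s - db_diff r s'"
    using r0 Ai by (simp add: db_diff_def s'_def k_def)
  moreover have "db_diff r s' \<subseteq> db_diff r s" by (auto simp: db_diff_def s'_def)
  ultimately have closer: "db_diff r s' \<subset> db_diff r s" by blast
  have "\<mu> x \<in> hom_values Y As \<gamma> s x" if \<mu>: "\<mu> \<in> homs Y As \<gamma> s'" for \<mu>
  proof -
    have other_atoms: "s (fst (As ! j)) (atom_tuple \<mu> (As ! j)) \<noteq> 0"
      if "j < length As" "j \<noteq> i" for j
    proof -
      have "fst (As ! j) \<noteq> R" using self_join_free_nth_eq[OF sjf i that(1)] that(2) Ai by force
      moreover have "s' (fst (As ! j)) (atom_tuple \<mu> (As ! j)) \<noteq> 0"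
        using \<mu> nth_mem[OF that(1)] by (simp add: homs_def)
      ultimately show ?thesis by (simp add: s'_def)
    qed
    show ?thesis
    proof (cases "take (length ys) (atom_tuple \<mu> (As ! i)) = k")
      case True
      then have "\<forall>v\<in>atom_key (As ! i). \<mu> v = \<rho> v"
        by (simp add: k_def Ai atom_tuple_def atom_key_def map_eq_conv)
      moreover have "sat_keys \<Sigma> s" using s by (simp add: repairs_def)
      moreover have "s (fst (As ! j)) (atom_tuple \<rho> (As ! j)) \<noteq> 0" if "j < length As" for j
        using assms(3) nth_mem[OF that] by (simp add: homs_def)
      ultimately have "\<forall>v\<in>key_closure As i. \<mu> v = \<rho> v"
        using agree_on_key_closure[OF _ keys i] other_atoms by blast
      moreover have "\<forall>v. v \<notin> Y \<longrightarrow> \<mu> v = \<gamma> v" using \<mu> by (simp add: homs_def)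
      ultimately obtain \<nu> where "\<nu> \<in> homs Y As \<gamma> s" "\<nu> x = \<mu> x"
        using hom_patch[OF unattacked \<open>x \<in> Y\<close> i assms(3)] other_atoms by blast
      then show ?thesis unfolding hom_values_def by (metis image_eqI)
    next
      case False
      moreover have "s' (fst (As ! i)) (atom_tuple \<mu> (As ! i)) \<noteq> 0"
        using \<mu> nth_mem[OF i] by (simp add: homs_def)
      ultimately have "s (fst (As ! i)) (atom_tuple \<mu> (As ! i)) \<noteq> 0"
        by (simp add: s'_def)
      then have "\<forall>A\<in>set As. s (fst A) (atom_tuple \<mu> A) \<noteq> 0"
        using other_atoms by (metis in_set_conv_nth)
      then have "\<mu> \<in> homs Y As \<gamma> s" using \<mu> by (simp add: homs_def)
      then show ?thesis by (simp add: hom_values_def)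
    qed
  qed
  then have "hom_values Y As \<gamma> s' x \<subseteq> hom_values Y As \<gamma> s x"
    by (auto simp: hom_values_def)
  with s' closer show ?thesis by blast
qed

lemma repair_below_both:
  fixes D :: "('r, 'a, 'k::zero) db"
  assumes "is_db ar D" and r: "r \<in> repairs \<Sigma> D"
  shows "s \<in> repairs \<Sigma> D \<Longrightarrow> \<exists>s\<^sub>0\<in>repairs \<Sigma> D.
           hom_values Y As \<gamma> s\<^sub>0 x \<subseteq> hom_values Y As \<gamma> r x \<inter> hom_values Y As \<gamma> s x"
proof (induction "card (db_diff r s)" arbitrary: s rule: less_induct)
  case less
  show ?case
  proof (cases "homs Y As \<gamma> s \<subseteq> homs Y As \<gamma> r")
    case True
    then show ?thesis using less.prems by (auto simp: hom_values_def)
  next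
    case False
    then obtain \<rho> where "\<rho> \<in> homs Y As \<gamma> s" "\<rho> \<notin> homs Y As \<gamma> r" by blast
    then obtain s' where s': "s' \<in> repairs \<Sigma> D" "db_diff r s' \<subset> db_diff r s"
      "hom_values Y As \<gamma> s' x \<subseteq> hom_values Y As \<gamma> s x"
      using exists_closer_repair[OF r less.prems] by blast
    then have "card (db_diff r s') < card (db_diff r s)"
      using psubset_card_mono finite_db_diff_repairs[OF assms(1) r less.prems] by blast
    then show ?thesis using less.hyps[OF _ s'(1)] s'(3) by blast
  qed
qed

end

theorem lemma4p13:
  fixes Y :: "'v set" and As :: "('r, 'v) atom list"
    and \<Sigma> :: "'r \<Rightarrow> nat option" and ar :: "'r \<Rightarrow> nat"
    and D :: "('r, 'a, 'k::comm_semiring_1) db" and \<gamma> :: "'v \<Rightarrow> 'a" and x :: 'v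
  assumes "positive_semiring TYPE('k)"
    and "naturally_ordered TYPE('k)"
    and "finite Y"
    and "self_join_free As"
    and "\<forall>(R, ys, zs)\<in>set As. length ys + length zs = ar R"
    and "\<forall>(R, ys, zs)\<in>set As. \<Sigma> R = Some (length ys)"
    and "\<forall>R. R \<notin> fst ` set As \<longrightarrow> \<Sigma> R = None"
    and "is_db ar D"
    and "\<forall>v. \<gamma> v \<in> adom D"
    and "\<forall>D'\<in>repairs \<Sigma> D. models D' \<gamma> Y As"
    and "x \<in> Y"
    and "unattacked Y As x"
  shows "\<exists>c\<in>adom D. \<forall>D'\<in>repairs \<Sigma> D. models D' (\<gamma>(x := c)) (Y - {x}) As"
proof -
  \<comment> \<open>Satisfaction only depends on supports.\<close>
  note pos = assms(1) and db = assms(8)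
  have meets: "hom_values Y As \<gamma> D' x \<inter> adom D' \<noteq> {}" if "D' \<in> repairs \<Sigma> D" for D'
    using hom_values_meet_adom[OF pos assms(3) finite_adom_repair[OF db that]] assms(10,11) that
    by blast
  define F where "F D' = hom_values Y As \<gamma> D' x \<inter> adom D" for D' :: "('r, 'a, 'k) db"
  have bounded: "\<forall>D'\<in>repairs \<Sigma> D. F D' \<subseteq> adom D \<and> F D' \<noteq> {}"
    using meets adom_mono[OF repair_subdb] unfolding F_def by blast
  have directed: "\<forall>r\<in>repairs \<Sigma> D. \<forall>s\<in>repairs \<Sigma> D. \<exists>s\<^sub>0\<in>repairs \<Sigma> D. F s\<^sub>0 \<subseteq> F r \<inter> F s"
    using repair_below_both[OF assms(4,6,12,11) db, where \<gamma> = \<gamma>] unfolding F_def by blast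
  have "adom D \<noteq> {}" using db by (simp add: is_db_def)
  then obtain c where "c \<in> adom D" and c: "\<forall>D'\<in>repairs \<Sigma> D. c \<in> F D'"
    using finite_directed_family_common_element[OF finite_adom[OF db] _ bounded directed] by blast
  have "models D' (\<gamma>(x := c)) (Y - {x}) As" if "D' \<in> repairs \<Sigma> D" for D'
    using models_fix_variable[OF pos assms(3) finite_adom_repair[OF db that]] meets[OF that] c that
    unfolding F_def by blast
  with \<open>c \<in> adom D\<close> show ?thesis by blast
qed

end
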